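(* Let $p>1$, $1\le q<\infty$, $T>0$, $I=(0,T)$, $\overline{I}=[0,T]$. Let $X$ be an $\mathbb{R}$-smooth Banach space over $\mathbb{K}\in\{\mathbb{R},\mathbb{C}\}$ and $Y$ a Banach space. For every $t\in\overline{I}$ let $\mathcal{D}(A(t))\subset\mathcal{D}(B(t))\subset X$ be subspaces and let $A(t):\mathcal{D}(A(t))\to X$, $B(t):\mathcal{D}(B(t))\to Y$ be (possibly nonlinear) operators; put $\mathcal{M}(t):=\{y\in\mathcal{D}(A(t)) : B(t)(y)=0\}$. Let $w\in C(\overline{I};X)\cap C^1(I;X)$ be a solution of $$\frac{dw}{dt}=A(t)(w)\ \text{on } I,\qquad w(0)=w_0,\qquad B(t)(w(t))=0,$$ with $w(t)\in\mathcal{M}(t)$ for $t\in I$. Let $w_\theta\in C(\overline{I};X)\cap C^1(I;X)$ with $w_\theta(t)\in\mathcal{D}(A(t))$, and define the residuals $$\mathcal{R}_{eq}(t)=\frac{dw_\theta}{dt}(t)-A(t)(w_\theta(t)),\quad \mathcal{R}_{in}=w_\theta(0)-w_0,\quad \mathcal{R}_{bn}(t)=B(t)(w_\theta(t)),$$ and the total error $\mathcal{E}:=\|w_\theta-w\|^q_{L^q(I;X)}$. Assume that for every $t\in\overline{I}$: $-A(t)$ is $(p,\psi(t))$-submonotone on $\mathcal{M}(t)$ with some function $\Lambda(t,\cdot,\cdot)\ge 0$, and $\psi(t)$ is subordinate to $B(t)$ on $\mathcal{M}(t)$ with some function $\gamma(t,\cdot,\cdot)\ge0$ and a function $\rho\in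 C(Y;\mathbb{R}^+)$ that does not depend on $t$. Assume moreover that $t\mapsto\gamma(t,w_\theta(t),w(t))$ belongs to $C(\overline{I})$ and $t\mapsto\Lambda(t,w_\theta(t),w(t))$ belongs to $L^1(I)$. Then $$\mathcal{E}\le \mathcal{C}^{\frac{q}{p}}\left(\frac{p\left(e^{\frac{q(p-1)T}{p}}-1\right)}{q(p-1)}\right)e^{q\|\Lambda(\cdot,w_\theta(\cdot),w(\cdot))\|_{L^1(I)}},$$ where $$\mathcal{C}=\|\mathcal{R}_{eq}\|^p_{L^p(I;X)}+\|\mathcal{R}_{in}\|^p+p\,\|\gamma(\cdot,w_\theta(\cdot),w(\cdot))\|_{C(\overline{I})}\,\|\rho(\mathcal{R}_{bn})\|_{L^1(I)},$$ and $\rho(\mathcal{R}_{bn})$ denotes the function $t\mapsto\rho(\mathcal{R}_{bn}(t))$.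
   Context: Gateaux $\mathbb{R}$-derivative: for $\varphi:X\to\mathbb{R}$, $D(\varphi)(y;\chi):=\lim_{\mathbb{R}\ni s\to0}\frac{\varphi(y+s\chi)-\varphi(y)}{s}$ when the limit exists. A Banach space $X$ is $\mathbb{R}$-smooth if $D(\|\cdot\|)(y;\chi)$ exists for every $y$ with $\|y\|=1$ and every $\chi\in X$ (hence, by homogeneity, for every $y\neq0$). The real $p$-form ($p>1$) is $\langle y_1,y_2\rangle_p:=\|y_2\|^{p-1}D(\|\cdot\|)(y_2;y_1)$ for $y_2\ne0$ and $\langle y_1,0\rangle_p:=0$; equivalently $\langle y_1,y_2\rangle_p=\|y_2\|^{p-2}\mathrm{Re}[y_1,y_2]$ with the semi-inner product $[\chi,y]=\|y\|\big(D(\|\cdot\|)(y;\chi)-iD(\|\cdot\|)(y;i\chi)\big)$. $(p,\psi)$-submonotone: for an operator $A:\mathcal{D}(A)\to X$, a subspace $\mathcal{M}\subset\mathcal{D}(A)$ and $\psi:\mathcal{D}(A)\times\mathcal{M}\to\mathbb{R}$, $-A$ is $(p,\psi)$-submonotone on $\mathcal{M}$ if $\langle A(\chi)-A(y),\chi-y\rangle_p\le\psi(\chi,y)+\Lambda(\chi,y)\|\chi-y\|^p$ for all $\chi\in\mathcal{D}(A)$, $y\in\mathcal{M}$, for some $\Lambda(\chi,y)\ge0$. Subordinate: for $\mathcal{M}\subset\mathcal{D}_\psi\subset\mathcal{D}(B)$, $B:\mathcal{D}(B)\to Y$ and $\psi:\mathcal{D}_\psi\times\mathcal{M}\to\mathbb{R}$,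 $\psi$ is subordinate to $B$ on $\mathcal{M}$ if there is $\rho\in C(Y;\mathbb{R}^+)$ with $\rho(\xi)\to0$ as $\xi\to0$ and $|\psi(\chi,y)|\le\gamma(\chi,y)\rho(B(\chi)-B(y))$ for all $\chi\in\mathcal{D}_\psi$, $y\in\mathcal{M}$, for some $\gamma(\chi,y)\ge0$. (Here $\mathcal{D}_\psi=\mathcal{D}(A(t))$.) $L^q(I;X)$ denotes the Bochner space. *)

theory Defs
  imports "HOL-Analysis.Analysis"
begin

definition norm_dq :: "'a::real_normed_vector \<Rightarrow> 'a \<Rightarrow> real \<Rightarrow> real" where
  "norm_dq y chi s = (norm (y + s *\<^sub>R chi) - norm y) / s"

definition gateaux_norm :: "'a::real_normed_vector \<Rightarrow> 'a \<Rightarrow> real" where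
  "gateaux_norm y chi = Lim (at 0) (norm_dq y chi)"

definition R_smooth :: "'a::real_normed_vector itself \<Rightarrow> bool" where
  "R_smooth _ \<longleftrightarrow> (\<forall>(y::'a) chi. norm y = 1 \<longrightarrow> (\<exists>d. (norm_dq y chi \<longlongrightarrow> d) (at 0)))"

definition p_form :: "real \<Rightarrow> 'a::real_normed_vector \<Rightarrow> 'a \<Rightarrow> real" where
  "p_form p y1 y2 = (if y2 = 0 then 0 else norm y2 powr (p - 1) * gateaux_norm y2 y1)"

definition p_psi_submonotone ::
  "real \<Rightarrow> ('a::real_normed_vector \<Rightarrow> 'a) \<Rightarrow> 'a set \<Rightarrow> 'a set \<Rightarrow> ('a \<Rightarrow> 'a \<Rightarrow> real)
     \<Rightarrow> ('a \<Rightarrow> 'a \<Rightarrow> real) \<Rightarrow> bool" where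
  "p_psi_submonotone p A DA M psi Lam \<longleftrightarrow>
     M \<subseteq> DA \<and>
     (\<forall>chi\<in>DA. \<forall>y\<in>M. Lam chi y \<ge> 0 \<and>
        p_form p (A chi - A y) (chi - y) \<le> psi chi y + Lam chi y * norm (chi - y) powr p)"

definition subordinate ::
  "('a \<Rightarrow> 'a \<Rightarrow> real) \<Rightarrow> ('a \<Rightarrow> 'b::real_normed_vector) \<Rightarrow> 'a set \<Rightarrow> 'a set
     \<Rightarrow> ('a \<Rightarrow> 'a \<Rightarrow> real) \<Rightarrow> ('b \<Rightarrow> real) \<Rightarrow> bool" where
  "subordinate psi B Dpsi M gam rho \<longleftrightarrow>
     continuous_on UNIV rho \<and> (\<forall>xi. rho xi \<ge> 0) \<and> (rho \<longlongrightarrow> 0) (at 0) \<and>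
     (\<forall>chi\<in>Dpsi. \<forall>y\<in>M. gam chi y \<ge> 0 \<and> \<bar>psi chi y\<bar> \<le> gam chi y * rho (B chi - B y))"

definition enn_powr :: "ennreal \<Rightarrow> real \<Rightarrow> ennreal" where
  "enn_powr x a = (if x = top then top else ennreal (enn2real x powr a))"

end

theory Submission
  imports Defs
begin

text \<open>Let \<open>e = w\<^sub>\<theta> - w\<close>. Since the norm of an \<open>\<real>\<close>-smooth space is Gateaux differentiable and
  sublinear in the direction, \<open>g = \<parallel>e\<parallel>\<^sup>p\<close> has derivative \<open>p \<langle>e', e\<rangle>\<^sub>p\<close>, and splitting
  \<open>e' = \<R>\<^sub>e\<^sub>q + (A w\<^sub>\<theta> - A w)\<close> gives, by Young's inequality for the first part and submonotonicity
  plus subordination (using \<open>B w = 0\<close>) for the second,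
  \<open>g' \<le> \<parallel>\<R>\<^sub>e\<^sub>q\<parallel>\<^sup>p + p \<parallel>\<gamma>\<parallel>\<^sub>\<infinity> \<rho>(\<R>\<^sub>b\<^sub>n) + (p - 1 + p \<bar>\<Lambda>\<bar>) g\<close>.
  Gronwall's inequality with the merely integrable coefficient \<open>\<bar>\<Lambda>\<bar>\<close> bounds \<open>g t\<close> by
  \<open>\<C> exp ((p - 1) t + p \<parallel>\<Lambda>\<parallel>\<^sub>1)\<close>; raising this to the power \<open>q / p\<close> and integrating
  \<open>exp (q (p - 1) t / p)\<close> over \<open>(0, T)\<close> yields the estimate.\<close>

lemma norm_dq_rescale:
  fixes y chi :: "'a::real_normed_vector"
  assumes "y \<noteq> 0"
  shows "norm_dq y chi s = norm_dq (y /\<^sub>R norm y) chi (s / norm y)"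
proof -
  have n: "norm y > 0" using assms by simp
  have "y + s *\<^sub>R chi = norm y *\<^sub>R (y /\<^sub>R norm y + (s / norm y) *\<^sub>R chi)"
    using n by (simp add: scaleR_add_right)
  then have "norm (y + s *\<^sub>R chi) = norm y * norm (y /\<^sub>R norm y + (s / norm y) *\<^sub>R chi)"
    using n by (metis abs_of_pos norm_scaleR)
  moreover have "norm (y /\<^sub>R norm y) = 1"
    using n by simp
  ultimately show ?thesis
    unfolding norm_dq_def using n by (simp add: algebra_simps)
qed

lemma gateaux_norm_tendsto:
  fixes y chi :: "'a::real_normed_vector"
  assumes smooth: "R_smooth TYPE('a)" and y: "y \<noteq> 0"
  shows "(norm_dq y chi \<longlongrightarrow> gateaux_norm y chi) (at 0)"
proof -
  have "norm (y /\<^sub>R norm y) = 1" using y by simp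
  then obtain d where d: "(norm_dq (y /\<^sub>R norm y) chi \<longlongrightarrow> d) (at 0)"
    using smooth unfolding R_smooth_def by blast
  have "filterlim (\<lambda>s. s / norm y) (at 0) (at 0)"
    using y by (intro filterlim_atI) (auto intro!: tendsto_eq_intros simp: eventually_at_filter)
  moreover have "norm_dq y chi = (\<lambda>s. norm_dq (y /\<^sub>R norm y) chi (s / norm y))"
    using norm_dq_rescale[OF y] by (rule ext)
  ultimately have "(norm_dq y chi \<longlongrightarrow> d) (at 0)"
    using filterlim_compose[OF d] by simp
  then show ?thesis
    unfolding gateaux_norm_def by (simp add: tendsto_Lim)
qed

lemma norm_dq_abs_le:
  fixes y chi :: "'a::real_normed_vector"
  assumes "s \<noteq> 0"
  shows "\<bar>norm_dq y chi s\<bar> \<le> norm chi"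
proof -
  have "\<bar>norm (y + s *\<^sub>R chi) - norm y\<bar> \<le> \<bar>s\<bar> * norm chi"
    by (metis add_diff_cancel_left' norm_scaleR norm_triangle_ineq3)
  then show ?thesis
    unfolding norm_dq_def using assms by (simp add: abs_divide divide_le_eq mult.commute)
qed

lemma gateaux_norm_le_norm:
  fixes y chi :: "'a::real_normed_vector"
  assumes "R_smooth TYPE('a)" and "y \<noteq> 0"
  shows "gateaux_norm y chi \<le> norm chi"
  by (rule tendsto_upperbound[OF gateaux_norm_tendsto[OF assms]])
     (auto simp: eventually_at_filter intro!: always_eventually norm_dq_abs_le[THEN abs_le_D1])

lemma norm_dq_add_le:
  fixes y a b :: "'a::real_normed_vector"
  assumes s: "s > 0"
  shows "norm_dq y (a + b) s \<le> norm_dq y a (2 * s) + norm_dq y b (2 * s)"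
proof -
  have midpoint: "y + s *\<^sub>R (a + b) = (1/2) *\<^sub>R (y + (2 * s) *\<^sub>R a) + (1/2) *\<^sub>R (y + (2 * s) *\<^sub>R b)"
    by (simp add: algebra_simps scaleR_add_right flip: scaleR_add_left)
  have "norm (y + s *\<^sub>R (a + b))
      \<le> norm ((1/2) *\<^sub>R (y + (2 * s) *\<^sub>R a)) + norm ((1/2) *\<^sub>R (y + (2 * s) *\<^sub>R b))"
    unfolding midpoint by (rule norm_triangle_ineq)
  then have "2 * (norm (y + s *\<^sub>R (a + b)) - norm y)
      \<le> (norm (y + (2 * s) *\<^sub>R a) - norm y) + (norm (y + (2 * s) *\<^sub>R b) - norm y)"
    by simp
  then have "2 * (norm (y + s *\<^sub>R (a + b)) - norm y) / (2 * s)
      \<le> ((norm (y + (2 * s) *\<^sub>R a) - norm y) + (norm (y + (2 * s) *\<^sub>R b) - norm y)) / (2 * s)"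
    using s by (simp add: divide_right_mono)
  moreover have "(norm (y + s *\<^sub>R (a + b)) - norm y) / s
      = 2 * (norm (y + s *\<^sub>R (a + b)) - norm y) / (2 * s)"
    by (rule mult_divide_mult_cancel_left[symmetric]) simp
  ultimately show ?thesis
    unfolding norm_dq_def add_divide_distrib by linarith
qed

lemma gateaux_norm_add_le:
  fixes y a b :: "'a::real_normed_vector"
  assumes smooth: "R_smooth TYPE('a)" and y: "y \<noteq> 0"
  shows "gateaux_norm y (a + b) \<le> gateaux_norm y a + gateaux_norm y b"
proof -
  have "filterlim (\<lambda>s. 2 * s) (at 0) (at_right (0::real))"
    by (intro filterlim_atI) (auto intro!: tendsto_eq_intros simp: eventually_at_filter)
  from filterlim_compose[OF gateaux_norm_tendsto[OF smooth y] this]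
  have double: "\<And>c. ((\<lambda>s. norm_dq y c (2 * s)) \<longlongrightarrow> gateaux_norm y c) (at_right 0)" .
  have single: "\<And>c. (norm_dq y c \<longlongrightarrow> gateaux_norm y c) (at_right 0)"
    using gateaux_norm_tendsto[OF smooth y] by (rule tendsto_within_subset) simp
  show ?thesis
    by (rule tendsto_le[OF _ tendsto_add[OF double double] single])
       (auto simp: eventually_at_filter intro!: norm_dq_add_le always_eventually)
qed

lemma p_form_add_le:
  fixes a b y :: "'a::real_normed_vector"
  assumes "R_smooth TYPE('a)"
  shows "p_form p (a + b) y \<le> norm y powr (p - 1) * norm a + p_form p b y"
proof (cases "y = 0")
  case False
  have "gateaux_norm y (a + b) \<le> norm a + gateaux_norm y b"
    using gateaux_norm_add_le[OF assms False, of a b] gateaux_norm_le_norm[OF assms False, of a]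
    by linarith
  then show ?thesis
    unfolding p_form_def using False by (simp add: mult_left_mono flip: distrib_left)
qed (simp add: p_form_def)

lemma Youngs_inequality_conjugate_powr:
  fixes p r n :: real
  assumes p: "p > 1" and "0 \<le> r" "0 \<le> n"
  shows "p * (n powr (p - 1) * r) \<le> r powr p + (p - 1) * n powr p"
proof -
  have "r * n powr (p - 1) \<le> r powr p / p + (n powr (p - 1)) powr (p / (p - 1)) / (p / (p - 1))"
    using assms by (intro Youngs_inequality) (auto simp: field_simps)
  also have "(n powr (p - 1)) powr (p / (p - 1)) = n powr p"
    using p by (simp add: powr_powr)
  finally show ?thesis
    using p by (simp add: field_simps)
qed

lemma p_form_residual_le:
  fixes A :: "'a::real_normed_vector \<Rightarrow> 'a" and B :: "'a \<Rightarrow> 'b::real_normed_vector"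
  assumes smooth: "R_smooth TYPE('a)" and p: "p > 1"
    and submon: "p_psi_submonotone p A D {y \<in> D. B y = 0} psi Lam"
    and subord: "subordinate psi B D {y \<in> D. B y = 0} gam rho"
    and x: "x \<in> D" and y: "y \<in> D" "B y = 0" and gam: "gam x y \<le> S" and Lam: "Lam x y \<le> l"
  shows "p * p_form p (v - A y) (x - y)
    \<le> norm (v - A x) powr p + p * S * rho (B x) + ((p - 1) + p * l) * norm (x - y) powr p"
proof -
  have "p_form p (A x - A y) (x - y) \<le> psi x y + Lam x y * norm (x - y) powr p"
    using submon x y unfolding p_psi_submonotone_def by blast
  moreover have "psi x y \<le> gam x y * rho (B x)" and "0 \<le> rho (B x)"
    using subord x y unfolding subordinate_def by force+
  ultimately have submon_bound:
      "p_form p (A x - A y) (x - y) \<le> S * rho (B x) + l * norm (x - y) powr p"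
    using mult_right_mono[OF gam \<open>0 \<le> rho (B x)\<close>]
      mult_right_mono[OF Lam powr_ge_zero, of "norm (x - y)" p]
    by linarith
  have "p_form p (v - A y) (x - y)
      \<le> norm (x - y) powr (p - 1) * norm (v - A x) + p_form p (A x - A y) (x - y)"
    using p_form_add_le[OF smooth, of p "v - A x" "A x - A y"] by simp
  then have "p * p_form p (v - A y) (x - y)
      \<le> p * (norm (x - y) powr (p - 1) * norm (v - A x)) + p * p_form p (A x - A y) (x - y)"
    using p by (simp add: mult_left_mono flip: distrib_left)
  also have "\<dots> \<le> (norm (v - A x) powr p + (p - 1) * norm (x - y) powr p)
      + p * (S * rho (B x) + l * norm (x - y) powr p)"
    using submon_bound p
    by (intro add_mono Youngs_inequality_conjugate_powr mult_left_mono) simp_all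
  also have "\<dots> = norm (v - A x) powr p + p * S * rho (B x)
      + ((p - 1) + p * l) * norm (x - y) powr p"
    by (simp add: algebra_simps)
  finally show ?thesis .
qed

lemma has_real_derivative_norm:
  fixes e :: "real \<Rightarrow> 'a::real_normed_vector"
  assumes smooth: "R_smooth TYPE('a)" and e: "(e has_vector_derivative e') (at t)" and nz: "e t \<noteq> 0"
  shows "((\<lambda>s. norm (e s)) has_real_derivative gateaux_norm (e t) e') (at t)"
  unfolding DERIV_def
proof -
  let ?r = "\<lambda>h. (norm (e (t + h)) - norm (e t + h *\<^sub>R e')) / h"
  have remainder: "((\<lambda>h. norm (e (t + h) - e t - h *\<^sub>R e') / \<bar>h\<bar>) \<longlongrightarrow> 0) (at 0)"
    using e unfolding has_vector_derivative_def has_derivative_at by simp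
  have "norm (?r h) \<le> norm (norm (e (t + h) - e t - h *\<^sub>R e') / \<bar>h\<bar>) * 1" for h
  proof -
    have "\<bar>norm (e (t + h)) - norm (e t + h *\<^sub>R e')\<bar> \<le> norm (e (t + h) - e t - h *\<^sub>R e')"
      using norm_triangle_ineq3[of "e (t + h)" "e t + h *\<^sub>R e'"] by (simp add: diff_diff_eq)
    then show ?thesis
      by (simp add: abs_divide divide_right_mono)
  qed
  then have "(?r \<longlongrightarrow> 0) (at 0)"
    by (intro tendsto_0_le[OF remainder] always_eventually allI)
  from tendsto_add[OF gateaux_norm_tendsto[OF smooth nz] this]
  have "((\<lambda>h. norm_dq (e t) e' h + ?r h) \<longlongrightarrow> gateaux_norm (e t) e') (at 0)"
    by simp
  moreover have "\<forall>\<^sub>F h in at 0. norm_dq (e t) e' h + ?r h = (norm (e (t + h)) - norm (e t)) / h"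
    by (auto simp: eventually_at_filter norm_dq_def diff_divide_distrib intro!: always_eventually)
  ultimately show "((\<lambda>h. (norm (e (t + h)) - norm (e t)) / h) \<longlongrightarrow> gateaux_norm (e t) e') (at 0)"
    by (simp add: tendsto_cong)
qed

text \<open>The norm itself need not be differentiable at a zero of \<open>e\<close>, but its \<open>p\<close>-th power is,
  since \<open>\<parallel>e (t + h)\<parallel> = O(\<bar>h\<bar>)\<close> and \<open>p > 1\<close>.\<close>
lemma has_real_derivative_norm_powr_zero:
  fixes e :: "real \<Rightarrow> 'a::real_normed_vector"
  assumes p: "p > 1" and e: "(e has_vector_derivative e') (at t)" and z: "e t = 0"
  shows "((\<lambda>s. norm (e s) powr p) has_real_derivative 0) (at t)"
  unfolding DERIV_def
proof -
  define M where "M = norm e' + 1"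
  have M: "M > 0" unfolding M_def by (simp add: add_nonneg_pos)
  have "((\<lambda>h. norm (e (t + h) - e t - h *\<^sub>R e') / \<bar>h\<bar>) \<longlongrightarrow> 0) (at 0)"
    using e unfolding has_vector_derivative_def has_derivative_at by simp
  then have "\<forall>\<^sub>F h in at 0. norm (e (t + h) - e t - h *\<^sub>R e') / \<bar>h\<bar> < 1"
    by (rule order_tendstoD) simp
  then have small: "\<forall>\<^sub>F h in at 0. norm (e (t + h)) \<le> M * \<bar>h\<bar>"
  proof (rule eventually_mono)
    fix h :: real
    assume h: "norm (e (t + h) - e t - h *\<^sub>R e') / \<bar>h\<bar> < 1"
    then have "norm (e (t + h) - h *\<^sub>R e') \<le> \<bar>h\<bar>"
      using z by (cases "h = 0") (auto simp: divide_less_eq)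
    then show "norm (e (t + h)) \<le> M * \<bar>h\<bar>"
      using norm_triangle_ineq2[of "e (t + h)" "h *\<^sub>R e'"] by (simp add: M_def algebra_simps)
  qed
  have "((\<lambda>h::real. M powr p * \<bar>h\<bar> powr (p - 1)) \<longlongrightarrow> 0) (at 0)"
    using p by (auto intro!: tendsto_mult_right_zero tendsto_zero_powrI tendsto_eq_intros)
  then show "((\<lambda>h. (norm (e (t + h)) powr p - norm (e t) powr p) / h) \<longlongrightarrow> 0) (at 0)"
  proof (rule tendsto_0_le[where K=1])
    show "\<forall>\<^sub>F h in at 0. norm ((norm (e (t + h)) powr p - norm (e t) powr p) / h)
        \<le> norm (M powr p * \<bar>h\<bar> powr (p - 1)) * 1"
      using small
    proof (rule eventually_mono)
      fix h :: real
      assume h: "norm (e (t + h)) \<le> M * \<bar>h\<bar>"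
      show "norm ((norm (e (t + h)) powr p - norm (e t) powr p) / h)
          \<le> norm (M powr p * \<bar>h\<bar> powr (p - 1)) * 1"
      proof (cases "h = 0")
        case False
        have "norm (e (t + h)) powr p \<le> (M * \<bar>h\<bar>) powr p"
          using h p by (intro powr_mono2) auto
        also have "\<dots> = M powr p * \<bar>h\<bar> powr (p - 1) * \<bar>h\<bar>"
          using M False by (simp add: powr_mult powr_diff)
        finally show ?thesis
          using z p False by (simp add: abs_divide divide_le_eq)
      qed simp
    qed
  qed
qed

lemma has_real_derivative_norm_powr:
  fixes e :: "real \<Rightarrow> 'a::real_normed_vector"
  assumes smooth: "R_smooth TYPE('a)" and p: "p > 1" and e: "(e has_vector_derivative e') (at t)"
  shows "((\<lambda>s. norm (e s) powr p) has_real_derivative p * p_form p e' (e t)) (at t)"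
proof (cases "e t = 0")
  case True
  then show ?thesis
    using has_real_derivative_norm_powr_zero[OF p e] by (simp add: p_form_def)
next
  case False
  from DERIV_fun_powr[OF has_real_derivative_norm[OF smooth e False], of p] False
  show ?thesis
    by (simp add: p_form_def mult.assoc)
qed

lemma integral_Icc_diff:
  fixes f :: "real \<Rightarrow> real"
  assumes f: "f integrable_on {a..b}" and "a \<le> x" "x \<le> y" "y \<le> b"
  shows "integral {a..y} f - integral {a..x} f = integral {x..y} f"
  using Henstock_Kurzweil_Integration.integral_combine[of a x y f]
    integrable_subinterval_real[OF f, of a y] assms
  by simp

lemma one_le_one_minus_mult_exp:
  fixes c \<delta> :: real
  assumes "1 < c" "0 \<le> \<delta>" "c * \<delta> \<le> c - 1"
  shows "1 \<le> (1 - \<delta>) * exp (c * \<delta>)"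
proof -
  have "\<delta> \<le> 1"
    using assms by (smt (verit) mult_le_cancel_left2)
  have "(1 - \<delta>) * (1 + c * \<delta>) = 1 + \<delta> * (c - 1 - c * \<delta>)"
    by (simp add: algebra_simps)
  also have "1 \<le> \<dots>"
    using assms by simp
  finally have "1 \<le> (1 - \<delta>) * (1 + c * \<delta>)" .
  also have "\<dots> \<le> (1 - \<delta>) * exp (c * \<delta>)"
    using \<open>\<delta> \<le> 1\<close> by (intro mult_left_mono exp_ge_add_one_self) simp
  finally show ?thesis .
qed

lemma le_initial_value_if_short_steps_nonincreasing:
  fixes F :: "real \<Rightarrow> real"
  assumes \<eta>: "\<eta> > 0"
    and step: "\<And>x y. 0 \<le> x \<Longrightarrow> x \<le> y \<Longrightarrow> y \<le> T \<Longrightarrow> y - x < \<eta> \<Longrightarrow> F y \<le> F x"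
    and t: "t \<in> {0..T}"
  shows "F t \<le> F 0"
proof -
  have "\<forall>s\<in>{0..T}. s \<le> real n * (\<eta> / 2) \<longrightarrow> F s \<le> F 0" for n
  proof (induction n)
    case (Suc n)
    show ?case
    proof (intro ballI impI)
      fix s
      assume s: "s \<in> {0..T}" "s \<le> real (Suc n) * (\<eta> / 2)"
      define s' where "s' = max 0 (s - \<eta> / 2)"
      have "F s \<le> F s'"
        using step[of s' s] s \<eta> by (auto simp: s'_def)
      also have "F s' \<le> F 0"
      proof -
        have "s' \<in> {0..T}" "s' \<le> real n * (\<eta> / 2)"
          using s \<eta> by (auto simp: s'_def algebra_simps max_def)
        then show ?thesis
          using Suc.IH by blast
      qed
      finally show "F s \<le> F 0" .
    qed
  qed auto
  moreover obtain n where "t < real n * (\<eta> / 2)"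
    using ex_less_of_nat_mult[of "\<eta> / 2" t] \<eta> by auto
  ultimately show ?thesis
    using t by (meson less_imp_le)
qed

lemma gronwall_integral_step:
  fixes g a :: "real \<Rightarrow> real"
  assumes g0: "\<And>s. s \<in> {0..T} \<Longrightarrow> 0 \<le> g s"
    and a_int: "a integrable_on {0..T}" and a0: "\<And>s. s \<in> {0..T} \<Longrightarrow> 0 \<le> a s"
    and ag_int: "(\<lambda>s. a s * g s) integrable_on {0..T}"
    and ineq: "\<And>s. s \<in> {0..T} \<Longrightarrow> g s \<le> K + integral {0..s} (\<lambda>r. a r * g r)"
    and xy: "0 \<le> x" "x \<le> y" "y \<le> T"
  shows "(K + integral {0..y} (\<lambda>r. a r * g r)) * (1 - integral {x..y} a)
    \<le> K + integral {0..x} (\<lambda>r. a r * g r)"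
proof -
  define U where "U s = K + integral {0..s} (\<lambda>r. a r * g r)" for s
  have U_mono: "U r \<le> U y" if "0 \<le> r" "r \<le> y" for r
  proof -
    have "0 \<le> integral {r..y} (\<lambda>r. a r * g r)"
      using that xy a0 g0 integrable_subinterval_real[OF ag_int, of r y]
      by (intro Henstock_Kurzweil_Integration.integral_nonneg) auto
    then show ?thesis
      using integral_Icc_diff[OF ag_int that xy(3)] by (simp add: U_def)
  qed
  have "integral {x..y} (\<lambda>r. a r * g r) \<le> integral {x..y} (\<lambda>r. a r * U y)"
  proof (rule integral_le)
    show "(\<lambda>r. a r * g r) integrable_on {x..y}" "(\<lambda>r. a r * U y) integrable_on {x..y}"
      using xy integrable_subinterval_real[OF ag_int] integrable_subinterval_real[OF a_int]
      by (auto intro: integrable_on_mult_left)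
    fix r
    assume r: "r \<in> {x..y}"
    then have "g r \<le> U y"
      using ineq[of r] U_mono[of r] xy by (simp add: U_def)
    then show "a r * g r \<le> a r * U y"
      using a0[of r] r xy by (intro mult_left_mono) auto
  qed
  also have "\<dots> = integral {x..y} a * U y"
    by (rule integral_mult_left)
  finally have "integral {x..y} (\<lambda>r. a r * g r) \<le> integral {x..y} a * U y" .
  moreover have "U y - U x = integral {x..y} (\<lambda>r. a r * g r)"
    using integral_Icc_diff[OF ag_int xy] by (simp add: U_def)
  ultimately have "U y * (1 - integral {x..y} a) \<le> U x"
    by (simp add: algebra_simps)
  then show ?thesis
    by (simp add: U_def)
qed

text \<open>With \<open>U s = K + \<integral>\<^sub>0\<^sup>s a g\<close>, a step \<open>[x, y]\<close> carrying mass \<open>\<delta>\<close> of \<open>a\<close> only gives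
  \<open>U y (1 - \<delta>) \<le> U x\<close>; the factor \<open>c > 1\<close> absorbs the quadratic error in
  \<open>1 / (1 - \<delta>) \<le> exp (c \<delta>)\<close>, and uniform continuity of \<open>\<integral>\<^sub>0\<^sup>s a\<close> keeps \<open>\<delta>\<close> small.\<close>
lemma gronwall_integral_exp_mult:
  fixes g a :: "real \<Rightarrow> real"
  assumes g0: "\<And>s. s \<in> {0..T} \<Longrightarrow> 0 \<le> g s"
    and a_int: "a integrable_on {0..T}" and a0: "\<And>s. s \<in> {0..T} \<Longrightarrow> 0 \<le> a s"
    and ag_int: "(\<lambda>s. a s * g s) integrable_on {0..T}"
    and K: "0 \<le> K"
    and ineq: "\<And>s. s \<in> {0..T} \<Longrightarrow> g s \<le> K + integral {0..s} (\<lambda>r. a r * g r)"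
    and c: "1 < c" and t: "t \<in> {0..T}"
  shows "g t \<le> K * exp (c * integral {0..t} a)"
proof -
  define U where "U s = K + integral {0..s} (\<lambda>r. a r * g r)" for s
  define A where "A s = integral {0..s} a" for s
  have "uniformly_continuous_on {0..T} A"
    unfolding A_def
    by (intro compact_uniformly_continuous indefinite_integral_continuous_1 a_int compact_Icc)
  moreover have "(c - 1) / c > 0"
    using c by simp
  ultimately have "\<exists>\<eta>>0. \<forall>x\<in>{0..T}. \<forall>y\<in>{0..T}. dist y x < \<eta> \<longrightarrow> dist (A y) (A x) < (c - 1) / c"
    unfolding uniformly_continuous_on_def by simp
  then obtain \<eta> where \<eta>: "\<eta> > 0"
    and A_close: "\<forall>x\<in>{0..T}. \<forall>y\<in>{0..T}. dist y x < \<eta> \<longrightarrow> dist (A y) (A x) < (c - 1) / c"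
    by blast
  define F where "F s = U s * exp (- (c * A s))" for s
  have "F y \<le> F x" if xy: "0 \<le> x" "x \<le> y" "y \<le> T" "y - x < \<eta>" for x y
  proof -
    define \<delta> where "\<delta> = A y - A x"
    have \<delta>: "\<delta> = integral {x..y} a"
      using integral_Icc_diff[OF a_int xy(1-3)] by (simp add: \<delta>_def A_def)
    have "0 \<le> integral {x..y} a"
      using a0 xy integrable_subinterval_real[OF a_int, of x y]
      by (intro Henstock_Kurzweil_Integration.integral_nonneg) auto
    then have "0 \<le> \<delta>"
      using \<delta> by simp
    moreover have "dist (A y) (A x) < (c - 1) / c"
      using xy by (intro A_close[rule_format]) (auto simp: dist_real_def)
    then have "\<delta> < (c - 1) / c"
      using \<open>0 \<le> \<delta>\<close> by (simp add: \<delta>_def dist_real_def)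
    ultimately have "1 \<le> (1 - \<delta>) * exp (c * \<delta>)"
      using c by (intro one_le_one_minus_mult_exp) (simp_all add: field_simps)
    moreover have "0 \<le> U y"
    proof -
      have "0 \<le> integral {0..y} (\<lambda>r. a r * g r)"
        using xy g0 a0 integrable_subinterval_real[OF ag_int, of 0 y]
        by (intro Henstock_Kurzweil_Integration.integral_nonneg) auto
      then show ?thesis
        using K by (simp add: U_def)
    qed
    ultimately have "F y \<le> U y * ((1 - \<delta>) * exp (c * \<delta>)) * exp (- (c * A y))"
      unfolding F_def by (metis exp_ge_zero mult.right_neutral mult_left_mono mult_right_mono)
    also have "\<dots> = U y * (1 - \<delta>) * exp (- (c * A x))"
      by (simp add: \<delta>_def algebra_simps flip: exp_add)
    also have "\<dots> \<le> F x"
      using gronwall_integral_step[OF g0 a_int a0 ag_int ineq xy(1-3)]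
      by (simp add: F_def U_def \<delta> mult_right_mono)
    finally show ?thesis .
  qed
  then have "F t \<le> F 0"
    using le_initial_value_if_short_steps_nonincreasing[OF \<eta> _ t] by blast
  then have "U t \<le> K * exp (c * A t)"
    by (simp add: F_def U_def A_def exp_minus field_simps)
  then show ?thesis
    using ineq[OF t] by (simp add: U_def A_def)
qed

lemma gronwall_integral:
  fixes g a :: "real \<Rightarrow> real"
  assumes g0: "\<And>s. s \<in> {0..T} \<Longrightarrow> 0 \<le> g s"
    and a_int: "a integrable_on {0..T}" and a0: "\<And>s. s \<in> {0..T} \<Longrightarrow> 0 \<le> a s"
    and ag_int: "(\<lambda>s. a s * g s) integrable_on {0..T}"
    and K: "0 \<le> K"
    and ineq: "\<And>s. s \<in> {0..T} \<Longrightarrow> g s \<le> K + integral {0..s} (\<lambda>r. a r * g r)"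
    and t: "t \<in> {0..T}"
  shows "g t \<le> K * exp (integral {0..t} a)"
proof (rule tendsto_lowerbound)
  show "((\<lambda>c. K * exp (c * integral {0..t} a)) \<longlongrightarrow> K * exp (integral {0..t} a)) (at_right 1)"
    by (auto intro!: tendsto_eq_intros)
  show "\<forall>\<^sub>F c in at_right 1. g t \<le> K * exp (c * integral {0..t} a)"
    by (auto simp: eventually_at_right_less
        intro!: eventually_at_rightI[of 1 2]
          gronwall_integral_exp_mult[OF g0 a_int a0 ag_int K ineq _ t])
qed simp

lemma gronwall_differential:
  fixes g g' h a :: "real \<Rightarrow> real"
  assumes g_cont: "continuous_on {0..T} g" and g0: "\<And>s. s \<in> {0..T} \<Longrightarrow> 0 \<le> g s"
    and g_der: "\<And>s. s \<in> {0<..<T} \<Longrightarrow> (g has_real_derivative g' s) (at s)"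
    and g'_le: "\<And>s. s \<in> {0<..<T} \<Longrightarrow> g' s \<le> h s + a s * g s"
    and h_int: "h integrable_on {0..T}" and h0: "\<And>s. s \<in> {0..T} \<Longrightarrow> 0 \<le> h s"
    and a_int: "a integrable_on {0..T}" and a0: "\<And>s. s \<in> {0..T} \<Longrightarrow> 0 \<le> a s"
    and t: "t \<in> {0..T}"
  shows "g t \<le> (g 0 + integral {0..T} h) * exp (integral {0..t} a)"
proof (rule gronwall_integral[OF g0 a_int a0 _ _ _ t])
  have "(\<lambda>s. g s * a s) absolutely_integrable_on {0..T}"
    using g_cont a0
    by (intro absolutely_integrable_bounded_measurable_product_real
        continuous_imp_measurable_on_sets_lebesgue
        compact_imp_bounded compact_continuous_image nonnegative_absolutely_integrable_1 a_int) auto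
  then show ag_int: "(\<lambda>s. a s * g s) integrable_on {0..T}"
    by (simp add: absolutely_integrable_on_def mult.commute)
  show "0 \<le> g 0 + integral {0..T} h"
    using g0[of 0] t Henstock_Kurzweil_Integration.integral_nonneg[OF h_int h0] by simp
  fix s
  assume s: "s \<in> {0..T}"
  then have sub: "{0..s} \<subseteq> {0..T}"
    by auto
  have "(g' has_integral (g s - g 0)) {0..s}"
    using s g_der continuous_on_subset[OF g_cont sub]
    by (intro fundamental_theorem_of_calculus_interior)
       (auto simp: has_real_derivative_iff_has_vector_derivative)
  then have lhs: "(g' has_integral (g s - g 0)) {0<..<s}"
    by (simp add: has_integral_Icc_iff_Ioo)
  have "((\<lambda>r. h r + a r * g r) has_integral
      (integral {0..s} h + integral {0..s} (\<lambda>r. a r * g r))) {0..s}"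
    using integrable_subinterval_real[OF h_int sub] integrable_subinterval_real[OF ag_int sub]
    by (intro has_integral_add integrable_integral)
  then have rhs: "((\<lambda>r. h r + a r * g r) has_integral
      (integral {0..s} h + integral {0..s} (\<lambda>r. a r * g r))) {0<..<s}"
    by (simp add: has_integral_Icc_iff_Ioo)
  have "g s - g 0 \<le> integral {0..s} h + integral {0..s} (\<lambda>r. a r * g r)"
    using s g'_le by (intro has_integral_le[OF lhs rhs]) auto
  moreover have "integral {0..s} h \<le> integral {0..T} h"
    using sub h0 by (intro integral_subset_le integrable_subinterval_real[OF h_int] h_int) auto
  ultimately show "g s \<le> g 0 + integral {0..T} h + integral {0..s} (\<lambda>r. a r * g r)"
    by simp
qed

lemma has_integral_of_set_nn_integral:
  fixes f :: "'a::euclidean_space \<Rightarrow> real"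
  assumes f_meas: "set_borel_measurable lborel S f" and f0: "\<And>x. x \<in> S \<Longrightarrow> 0 \<le> f x"
    and f_nn: "(\<integral>\<^sup>+x\<in>S. ennreal (f x) \<partial>lborel) = ennreal r" and r: "0 \<le> r"
  shows "(f has_integral r) S"
proof -
  have "((\<lambda>x. indicator S x *\<^sub>R f x) has_integral r) UNIV"
  proof (rule nn_integral_has_integral)
    show "(\<lambda>x. indicator S x *\<^sub>R f x) \<in> borel_measurable borel"
      using f_meas unfolding set_borel_measurable_def by simp
    show "(\<integral>\<^sup>+x. ennreal (indicator S x *\<^sub>R f x) \<partial>lborel) = ennreal r"
    proof -
      have "(\<lambda>x. ennreal (indicator S x *\<^sub>R f x)) = (\<lambda>x. ennreal (f x) * indicator S x)"
        by (auto simp: indicator_def)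
      then show ?thesis
        using f_nn by simp
    qed
  qed (use f0 r in \<open>auto simp: indicator_def\<close>)
  then show ?thesis
    by (simp add: indicator_times_eq_if has_integral_restrict_UNIV)
qed

lemma nn_integral_mult_exp_Ioo:
  fixes M \<kappa> T :: real
  assumes "0 \<le> M" "\<kappa> \<noteq> 0" "0 \<le> T"
  shows "(\<integral>\<^sup>+t\<in>{0<..<T}. ennreal (M * exp (\<kappa> * t)) \<partial>lborel) = ennreal (M * (exp (\<kappa> * T) - 1) / \<kappa>)"
proof (rule nn_integral_has_integral_lebesgue')
  have "((\<lambda>t. M * exp (\<kappa> * t)) has_integral (M * exp (\<kappa> * T) / \<kappa> - M * exp (\<kappa> * 0) / \<kappa>)) {0..T}"
    using assms
    by (intro fundamental_theorem_of_calculus[where f="\<lambda>t. M * exp (\<kappa> * t) / \<kappa>"])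
       (auto intro!: derivative_eq_intros
         simp: has_real_derivative_iff_has_vector_derivative[symmetric])
  then show "((\<lambda>t. M * exp (\<kappa> * t)) has_integral (M * (exp (\<kappa> * T) - 1) / \<kappa>)) {0<..<T}"
    by (simp add: has_integral_Icc_iff_Ioo diff_divide_distrib right_diff_distrib)
qed (use assms in simp)

lemma gronwall_differential_affine:
  fixes g g' h lam :: "real \<Rightarrow> real"
  assumes g_cont: "continuous_on {0..T} g" and g0: "\<And>s. s \<in> {0..T} \<Longrightarrow> 0 \<le> g s"
    and g_der: "\<And>s. s \<in> {0<..<T} \<Longrightarrow> (g has_real_derivative g' s) (at s)"
    and g'_le: "\<And>s. s \<in> {0<..<T} \<Longrightarrow> g' s \<le> h s + (c + b * lam s) * g s"
    and h_int: "h integrable_on {0..T}" and h0: "\<And>s. s \<in> {0..T} \<Longrightarrow> 0 \<le> h s"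
    and lam_int: "lam integrable_on {0..T}" and lam0: "\<And>s. s \<in> {0..T} \<Longrightarrow> 0 \<le> lam s"
    and c: "0 \<le> c" and b: "0 \<le> b" and t: "t \<in> {0..T}"
  shows "g t \<le> (g 0 + integral {0..T} h) * exp (c * t + b * integral {0..T} lam)"
proof -
  have sub: "{0..t} \<subseteq> {0..T}"
    using t by auto
  have "integral {0..t} lam \<le> integral {0..T} lam"
    using lam0
    by (intro integral_subset_le[OF sub integrable_subinterval_real[OF lam_int sub] lam_int]) auto
  then have "integral {0..t} (\<lambda>s. c + b * lam s) \<le> c * t + b * integral {0..T} lam"
    using t b integrable_subinterval_real[OF lam_int sub]
    by (subst integral_add) (auto intro: integrable_on_mult_right mult_left_mono)
  moreover have "0 \<le> g 0 + integral {0..T} h"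
    using g0[of 0] t Henstock_Kurzweil_Integration.integral_nonneg[OF h_int h0] by simp
  moreover have "g t \<le> (g 0 + integral {0..T} h) * exp (integral {0..t} (\<lambda>s. c + b * lam s))"
    using g_cont g0 g_der g'_le h_int h0 lam_int lam0 c b t
    by (intro gronwall_differential) (auto intro!: integrable_add integrable_on_mult_right)
  ultimately show ?thesis
    by (meson exp_le_cancel_iff mult_left_mono order_trans)
qed

lemma nn_integral_powr_le_gronwall:
  fixes g g' h lam :: "real \<Rightarrow> real" and p q T :: real
  assumes p: "p > 1" and q: "q > 0" and T: "T > 0"
    and g_cont: "continuous_on {0..T} g" and g0: "\<And>t. t \<in> {0..T} \<Longrightarrow> 0 \<le> g t"
    and g_der: "\<And>t. t \<in> {0<..<T} \<Longrightarrow> (g has_real_derivative g' t) (at t)"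
    and g'_le: "\<And>t. t \<in> {0<..<T} \<Longrightarrow> g' t \<le> h t + ((p - 1) + p * lam t) * g t"
    and h_int: "h integrable_on {0..T}" and h0: "\<And>t. t \<in> {0..T} \<Longrightarrow> 0 \<le> h t"
    and lam_int: "lam integrable_on {0..T}" and lam0: "\<And>t. t \<in> {0..T} \<Longrightarrow> 0 \<le> lam t"
  shows "(\<integral>\<^sup>+t\<in>{0<..<T}. ennreal (g t powr (q / p)) \<partial>lborel)
    \<le> ennreal ((g 0 + integral {0..T} h) powr (q / p))
        * ennreal (p * (exp (q * (p - 1) * T / p) - 1) / (q * (p - 1)))
        * ennreal (exp (q * integral {0..T} lam))"
proof -
  define K where "K = g 0 + integral {0..T} h"
  define L where "L = integral {0..T} lam"
  define \<kappa> where "\<kappa> = q * (p - 1) / p"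
  define M where "M = K powr (q / p) * exp (q * L)"
  define Z where "Z = p * (exp (q * (p - 1) * T / p) - 1) / (q * (p - 1))"
  have "Z \<ge> 0"
    using p q T by (simp add: Z_def)
  have "K \<ge> 0"
    using g0[of 0] T Henstock_Kurzweil_Integration.integral_nonneg[OF h_int h0] by (simp add: K_def)
  have pointwise: "g t powr (q / p) \<le> M * exp (\<kappa> * t)" if t: "t \<in> {0..T}" for t
  proof -
    have "g t \<le> K * exp ((p - 1) * t + p * L)"
      using gronwall_differential_affine[OF g_cont g0 g_der g'_le h_int h0 lam_int lam0 _ _ t] p
      by (simp add: K_def L_def)
    then have "g t powr (q / p) \<le> (K * exp ((p - 1) * t + p * L)) powr (q / p)"
      using g0[OF t] p q by (intro powr_mono2) auto
    also have "\<dots> = K powr (q / p) * exp ((p - 1) * t + p * L) powr (q / p)"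
      using \<open>K \<ge> 0\<close> by (simp add: powr_mult)
    also have "exp ((p - 1) * t + p * L) powr (q / p) = exp (\<kappa> * t) * exp (q * L)"
      using p by (simp add: powr_def \<kappa>_def field_simps flip: exp_add)
    finally show ?thesis
      by (simp add: M_def mult_ac)
  qed
  have "(\<integral>\<^sup>+t\<in>{0<..<T}. ennreal (g t powr (q / p)) \<partial>lborel)
      \<le> (\<integral>\<^sup>+t\<in>{0<..<T}. ennreal (M * exp (\<kappa> * t)) \<partial>lborel)"
    using pointwise by (intro nn_integral_mono) (auto simp: indicator_def intro!: ennreal_leI)
  also have "\<dots> = ennreal (M * (exp (\<kappa> * T) - 1) / \<kappa>)"
    using p q T by (intro nn_integral_mult_exp_Ioo) (simp_all add: M_def \<kappa>_def)
  also have "\<dots> = ennreal (K powr (q / p) * Z * exp (q * L))"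
    by (simp add: M_def Z_def \<kappa>_def mult_ac)
  also have "\<dots> = ennreal (K powr (q / p)) * ennreal Z * ennreal (exp (q * L))"
    using \<open>Z \<ge> 0\<close> by (simp add: ennreal_mult)
  finally show ?thesis
    by (simp add: K_def L_def Z_def)
qed

lemma gronwall_nn_integral_powr:
  fixes g g' h lam :: "real \<Rightarrow> real" and p q T :: real
  assumes p: "p > 1" and q: "q > 0" and T: "T > 0"
    and g_cont: "continuous_on {0..T} g" and g0: "\<And>t. t \<in> {0..T} \<Longrightarrow> 0 \<le> g t"
    and g_der: "\<And>t. t \<in> {0<..<T} \<Longrightarrow> (g has_real_derivative g' t) (at t)"
    and g'_le: "\<And>t. t \<in> {0<..<T} \<Longrightarrow> g' t \<le> h t + ((p - 1) + p * lam t) * g t"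
    and h_meas: "set_borel_measurable lborel {0<..<T} h" and h0: "\<And>t. 0 \<le> h t"
    and lam_int: "set_integrable lborel {0<..<T} lam" and lam0: "\<And>t. 0 \<le> lam t"
  shows "(\<integral>\<^sup>+t\<in>{0<..<T}. ennreal (g t powr (q / p)) \<partial>lborel)
    \<le> enn_powr (ennreal (g 0) + (\<integral>\<^sup>+t\<in>{0<..<T}. ennreal (h t) \<partial>lborel)) (q / p)
      * ennreal (p * (exp (q * (p - 1) * T / p) - 1) / (q * (p - 1)))
      * ennreal (exp (q * (LINT t:{0<..<T}|lborel. lam t)))"
proof (cases "(\<integral>\<^sup>+t\<in>{0<..<T}. ennreal (h t) \<partial>lborel) = top")
  case True
  have "0 < p * (exp (q * (p - 1) * T / p) - 1) / (q * (p - 1))"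
    using p q T by simp
  with True p q show ?thesis
    by (simp add: enn_powr_def ennreal_top_mult)
next
  case False
  then obtain H where H: "(\<integral>\<^sup>+t\<in>{0<..<T}. ennreal (h t) \<partial>lborel) = ennreal H" and "0 \<le> H"
    using ennreal_cases by (metis top_neq_ennreal)
  then have h_int: "(h has_integral H) {0..T}"
    using has_integral_of_set_nn_integral[OF h_meas] h0 by (simp add: has_integral_Icc_iff_Ioo)
  have lam_int': "lam integrable_on {0..T}"
    and L: "integral {0..T} lam = (LINT t:{0<..<T}|lborel. lam t)"
    using set_borel_integral_eq_integral[OF lam_int]
    by (simp_all add: integrable_on_open_interval_real integral_open_interval_real)
  have "enn_powr (ennreal (g 0) + ennreal H) (q / p)
      = ennreal ((g 0 + integral {0..T} h) powr (q / p))"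
    using g0[of 0] T \<open>0 \<le> H\<close> integral_unique[OF h_int]
    by (simp add: enn_powr_def flip: ennreal_plus)
  with nn_integral_powr_le_gronwall[OF p q T g_cont g0 g_der g'_le] h_int h0 lam_int' lam0
  show ?thesis
    by (auto simp: H L)
qed

lemma set_borel_measurable_norm_powr:
  fixes f :: "'a \<Rightarrow> 'b::real_normed_vector"
  assumes f: "set_borel_measurable M S f" and p: "p > 0"
  shows "set_borel_measurable M S (\<lambda>x. norm (f x) powr p)"
proof -
  have "(\<lambda>x. indicator S x *\<^sub>R norm (f x) powr p) = (\<lambda>x. norm (indicator S x *\<^sub>R f x) powr p)"
    using p by (auto simp: indicator_def)
  with f show ?thesis
    unfolding set_borel_measurable_def by (simp only:) measurable
qed

lemma set_nn_integral_add_cmult: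
  fixes f g :: "'a \<Rightarrow> real"
  assumes f: "set_borel_measurable M S f" and g: "set_borel_measurable M S g"
    and f0: "\<And>x. 0 \<le> f x" and g0: "\<And>x. 0 \<le> g x" and c: "0 \<le> c"
  shows "set_borel_measurable M S (\<lambda>x. f x + c * g x)"
    and "(\<integral>\<^sup>+x\<in>S. ennreal (f x + c * g x) \<partial>M)
      = (\<integral>\<^sup>+x\<in>S. ennreal (f x) \<partial>M) + ennreal c * (\<integral>\<^sup>+x\<in>S. ennreal (g x) \<partial>M)"
proof -
  show "set_borel_measurable M S (\<lambda>x. f x + c * g x)"
  proof -
    have eq: "(\<lambda>x. indicator S x *\<^sub>R (f x + c * g x))
        = (\<lambda>x. indicator S x *\<^sub>R f x + c * (indicator S x *\<^sub>R g x))"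
      by (simp add: algebra_simps)
    show ?thesis
      using f g unfolding set_borel_measurable_def eq
      by (intro borel_measurable_add borel_measurable_times borel_measurable_const)
  qed
  have ennreal_indicator:
      "(\<lambda>x. ennreal (u x) * indicator S x) = (\<lambda>x. ennreal (indicator S x *\<^sub>R u x))"
    for u :: "'a \<Rightarrow> real"
    by (auto simp: indicator_def)
  have "(\<lambda>x. ennreal (f x) * indicator S x) \<in> borel_measurable M"
    "(\<lambda>x. ennreal (g x) * indicator S x) \<in> borel_measurable M"
    using f g unfolding set_borel_measurable_def ennreal_indicator by simp_all
  moreover have "ennreal (f x + c * g x) * indicator S x
      = ennreal (f x) * indicator S x + ennreal c * (ennreal (g x) * indicator S x)" for x
    using f0 g0 c by (simp add: ennreal_mult distrib_right mult.assoc)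
  ultimately show "(\<integral>\<^sup>+x\<in>S. ennreal (f x + c * g x) \<partial>M)
      = (\<integral>\<^sup>+x\<in>S. ennreal (f x) \<partial>M) + ennreal c * (\<integral>\<^sup>+x\<in>S. ennreal (g x) \<partial>M)"
    by (simp add: nn_integral_add nn_integral_cmult)
qed

theorem theorem1:
  fixes p q T :: real
    and A :: "real \<Rightarrow> 'x::banach \<Rightarrow> 'x" and B :: "real \<Rightarrow> 'x \<Rightarrow> 'y::banach"
    and DA DB :: "real \<Rightarrow> 'x set"
    and psi Lam gam :: "real \<Rightarrow> 'x \<Rightarrow> 'x \<Rightarrow> real"
    and rho :: "'y \<Rightarrow> real"
    and w w' w\<theta> w\<theta>' :: "real \<Rightarrow> 'x" and w0 :: 'x
  assumes p: "p > 1" and q: "1 \<le> q" and T: "T > 0"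
    and smooth: "R_smooth TYPE('x)"
    and subsA: "\<And>t. t \<in> {0..T} \<Longrightarrow> subspace (DA t)"
    and subsB: "\<And>t. t \<in> {0..T} \<Longrightarrow> subspace (DB t)"
    and DAB: "\<And>t. t \<in> {0..T} \<Longrightarrow> DA t \<subseteq> DB t"
    (* w is a solution *)
    and w_cont: "continuous_on {0..T} w"
    and w_der: "\<And>t. t \<in> {0<..<T} \<Longrightarrow> (w has_vector_derivative w' t) (at t)"
    and w'_cont: "continuous_on {0<..<T} w'"
    and w_eq: "\<And>t. t \<in> {0<..<T} \<Longrightarrow> w' t = A t (w t)"
    and w_init: "w 0 = w0"
    and w_M: "\<And>t. t \<in> {0<..<T} \<Longrightarrow> w t \<in> {y \<in> DA t. B t y = 0}"
    (* approximation w_theta *)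
    and wt_cont: "continuous_on {0..T} w\<theta>"
    and wt_der: "\<And>t. t \<in> {0<..<T} \<Longrightarrow> (w\<theta> has_vector_derivative w\<theta>' t) (at t)"
    and wt'_cont: "continuous_on {0<..<T} w\<theta>'"
    and wt_D: "\<And>t. t \<in> {0..T} \<Longrightarrow> w\<theta> t \<in> DA t"
    (* structural hypotheses *)
    and submon: "\<And>t. t \<in> {0..T} \<Longrightarrow>
        p_psi_submonotone p (A t) (DA t) {y \<in> DA t. B t y = 0} (psi t) (Lam t)"
    and subord: "\<And>t. t \<in> {0..T} \<Longrightarrow>
        subordinate (psi t) (B t) (DA t) {y \<in> DA t. B t y = 0} (gam t) rho"
    and gam_cont: "continuous_on {0..T} (\<lambda>t. gam t (w\<theta> t) (w t))"
    and Lam_L1: "set_integrable lborel {0<..<T} (\<lambda>t. Lam t (w\<theta> t) (w t))"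
    (* the residual norms are well defined (measurability) *)
    and Req_meas: "set_borel_measurable lborel {0<..<T} (\<lambda>t. w\<theta>' t - A t (w\<theta> t))"
    and Rbn_meas: "set_borel_measurable lborel {0<..<T} (\<lambda>t. rho (B t (w\<theta> t)))"
  shows
    "(\<integral>\<^sup>+ t\<in>{0<..<T}. ennreal (norm (w\<theta> t - w t) powr q) \<partial>lborel)
      \<le> enn_powr
           ((\<integral>\<^sup>+ t\<in>{0<..<T}. ennreal (norm (w\<theta>' t - A t (w\<theta> t)) powr p) \<partial>lborel)
            + ennreal (norm (w\<theta> 0 - w0) powr p)
            + ennreal (p * (SUP t\<in>{0..T}. \<bar>gam t (w\<theta> t) (w t)\<bar>))
              * (\<integral>\<^sup>+ t\<in>{0<..<T}. ennreal (rho (B t (w\<theta> t))) \<partial>lborel))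
           (q / p)
        * ennreal (p * (exp (q * (p - 1) * T / p) - 1) / (q * (p - 1)))
        * ennreal (exp (q * (LINT t:{0<..<T}|lborel. \<bar>Lam t (w\<theta> t) (w t)\<bar>)))"
proof -
  define S where "S = (SUP t\<in>{0..T}. \<bar>gam t (w\<theta> t) (w t)\<bar>)"
  have rho0: "\<And>\<xi>. 0 \<le> rho \<xi>"
    using subord[of 0] T by (simp add: subordinate_def)
  have gam_le_S: "\<bar>gam t (w\<theta> t) (w t)\<bar> \<le> S" if "t \<in> {0..T}" for t
    unfolding S_def using that gam_cont
    by (intro cSUP_upper bounded_imp_bdd_above compact_imp_bounded compact_continuous_image
        continuous_intros) auto
  have pS: "0 \<le> p * S"
    using order_trans[OF abs_ge_zero gam_le_S[of 0]] p T by simp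
  have R_meas: "set_borel_measurable lborel {0<..<T} (\<lambda>t. norm (w\<theta>' t - A t (w\<theta> t)) powr p)"
    using set_borel_measurable_norm_powr[OF Req_meas] p by simp
  note h = set_nn_integral_add_cmult[OF R_meas Rbn_meas powr_ge_zero rho0 pS]
  have err_cont: "continuous_on {0..T} (\<lambda>t. norm (w\<theta> t - w t) powr p)"
    using p by (intro continuous_on_powr' continuous_intros wt_cont w_cont) auto
  have err_der: "((\<lambda>s. norm (w\<theta> s - w s) powr p) has_real_derivative
      p * p_form p (w\<theta>' t - A t (w t)) (w\<theta> t - w t)) (at t)" if "t \<in> {0<..<T}" for t
    using has_real_derivative_norm_powr[OF smooth p has_vector_derivative_diff[OF wt_der w_der]]
      that w_eq by simp
  have err_der_le: "p * p_form p (w\<theta>' t - A t (w t)) (w\<theta> t - w t)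
      \<le> (norm (w\<theta>' t - A t (w\<theta> t)) powr p + p * S * rho (B t (w\<theta> t)))
        + ((p - 1) + p * \<bar>Lam t (w\<theta> t) (w t)\<bar>) * norm (w\<theta> t - w t) powr p"
    if "t \<in> {0<..<T}" for t
    using that w_M wt_D abs_le_D1[OF gam_le_S, of t]
    by (intro p_form_residual_le[OF smooth p submon subord]) auto
  have h0: "0 \<le> norm (w\<theta>' t - A t (w\<theta> t)) powr p + p * S * rho (B t (w\<theta> t))" for t
    using pS rho0 by simp
  have "0 < q"
    using q by simp
  from gronwall_nn_integral_powr[OF p this T err_cont powr_ge_zero err_der err_der_le h(1) h0
      set_integrable_abs[OF Lam_L1] abs_ge_zero, unfolded h(2) w_init] p
  show ?thesis
    unfolding S_def[symmetric] by (simp add: powr_powr add_ac)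
qed

end
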